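(* Let $M$ be an arithmetical list of $\mathbb{P}$ of reason $r\ge1$. There exists a real constant $\gamma_M$ such that, as $x\to\infty$, $$\prod_{p\le x,\,p\in M}\Big(1-\frac1p\Big)=\frac{e^{-\gamma_M}}{(\ln x)^{1/r}}+O\!\left(\frac{1}{(\ln x)^{1+1/r}}\right),\qquad \prod_{p\le x,\,p\in M}\Big(1-\frac1p\Big)^{-1}=e^{\gamma_M}(\ln x)^{1/r}+O\!\left((\ln x)^{1/r-1}\right).$$
   Context: Let $p_1=2<p_2=3<\dots$ be the primes in increasing order and $\mathbb{P}$ the set of primes. An arithmetical list of reason $r\ge1$ is a set $M=\{p_{r_0+jr}:j\ge0\}$ for some integer $1\le r_0\le r$. *)

theory Defs
  imports "HOL-Analysis.Analysis" "HOL-Library.Landau_Symbols" "HOL-Computational_Algebra.Primes"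
begin

text \<open>nth_prime k is the (k+1)-th prime in increasing order, so p_i = nth_prime (i - 1)
  for i \<ge> 1 (p_1 = 2).\<close>
definition nth_prime :: "nat \<Rightarrow> nat" where
  "nth_prime k = (THE p. prime p \<and> card {q. prime q \<and> q < p} = k)"

text \<open>Arithmetical list of reason r with starting index r0 (1 \<le> r0 \<le> r):
  {p_(r0 + j r) : j \<ge> 0}.\<close>
definition arith_list :: "nat \<Rightarrow> nat \<Rightarrow> nat set" where
  "arith_list r r0 = {nth_prime (r0 + j * r - 1) | j. True}"

end

(*
  Write the product as exp of L(x) = sum of ln (1 - 1/p) over p in M, p <= x.  Since
  ln (1 - 1/p) + 1/p = O(1/p^2), it suffices to show that the sum of 1/p over p in M, p <= x,
  is ln ln x / r + c + O(1/ln x).  Mertens' second theorem gives this for all primes; it is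
  proved from Chebyshev's bound theta(n) = O(n) and Legendre's formula for ln n! by Abel
  summation.  Because 1/p_k decreases, r times the sum of 1/p_(s+jr) exceeds the sum of 1/p_k
  over the same range by a convergent series whose tail is O(1/x), so the sum over M is
  1/r times the sum over all primes up to O(1/ln x).  Exponentiating
  L(x) = - ln ln x / r - gamma + O(1/ln x) gives both estimates.
*)
theory Submission
  imports Defs "HOL-Number_Theory.Prime_Powers" "HOL-Real_Asymp.Real_Asymp"
begin

lemma card_less_enumerate:
  fixes S :: "nat set"
  assumes "infinite S"
  shows "card {q\<in>S. q < enumerate S n} = n"
proof -
  have "{q\<in>S. q < enumerate S n} = enumerate S ` {..<n}"
  proof
    show "{q\<in>S. q < enumerate S n} \<subseteq> enumerate S ` {..<n}"
    proof
      fix q assume q: "q \<in> {q\<in>S. q < enumerate S n}"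
      then obtain i where "q = enumerate S i" using range_enumerate[OF assms] by blast
      with q assms show "q \<in> enumerate S ` {..<n}" by auto
    qed
  qed (use assms in \<open>auto intro: enumerate_in_set\<close>)
  moreover have "inj_on (enumerate S) {..<n}"
    using inj_enumerate[OF assms] by (rule inj_on_subset) simp
  ultimately show ?thesis by (simp add: card_image)
qed

lemma nth_prime_eq_enumerate: "nth_prime k = enumerate {p::nat. prime p} k"
proof -
  have inf: "infinite {p::nat. prime p}" using primes_infinite by simp
  have card: "card {q. prime q \<and> q < enumerate {p::nat. prime p} i} = i" for i
    using card_less_enumerate[OF inf, of i] by simp
  show ?thesis
    unfolding nth_prime_def
  proof (rule the_equality)
    show "prime (enumerate {p::nat. prime p} k) \<and> card {q. prime q \<and> q < enumerate {p::nat. prime p} k} = k"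
      using enumerate_in_set[OF inf] card by simp
  next
    fix p :: nat assume p: "prime p \<and> card {q. prime q \<and> q < p} = k"
    then obtain i where "p = enumerate {p::nat. prime p} i" using range_enumerate[OF inf] by blast
    with p card show "p = enumerate {p::nat. prime p} k" by simp
  qed
qed

lemma range_nth_prime: "range nth_prime = {p. prime p}"
  using range_enumerate primes_infinite by (simp add: nth_prime_eq_enumerate[abs_def])

lemma prime_nth_prime [simp]: "prime (nth_prime k)"
  using range_nth_prime by blast

lemma strict_mono_nth_prime: "strict_mono nth_prime"
  using strict_mono_enumerate primes_infinite by (simp add: nth_prime_eq_enumerate[abs_def])

lemma nth_prime_ge: "k + 2 \<le> nth_prime k"
proof (induction k)
  case 0
  show ?case using prime_ge_2_nat[OF prime_nth_prime[of 0]] by simp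
next
  case (Suc k)
  then show ?case using strict_monoD[OF strict_mono_nth_prime, of k "Suc k"] by simp
qed

definition count_terms_le :: "(nat \<Rightarrow> nat) \<Rightarrow> nat \<Rightarrow> nat" where
  "count_terms_le f N = (LEAST k. N < f k)"

lemma less_count_terms_le_iff:
  assumes "strict_mono f"
  shows "k < count_terms_le f N \<longleftrightarrow> f k \<le> N"
proof
  have "N < f (Suc N)" using strict_mono_imp_increasing[OF assms, of "Suc N"] by simp
  then have "N < f (count_terms_le f N)" unfolding count_terms_le_def by (rule LeastI)
  moreover assume "f k \<le> N"
  ultimately show "k < count_terms_le f N" using assms strict_mono_less by fastforce
qed (auto simp: count_terms_le_def dest: not_less_Least)

lemma sum_terms_le_strict_mono:
  fixes f :: "nat \<Rightarrow> nat" and g :: "nat \<Rightarrow> 'a::comm_monoid_add"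
  assumes "strict_mono f"
  shows "(\<Sum>x\<in>{x\<in>range f. x \<le> N}. g x) = (\<Sum>k<count_terms_le f N. g (f k))"
proof -
  have "{x\<in>range f. x \<le> N} = f ` {..<count_terms_le f N}"
    using less_count_terms_le_iff[OF assms] by auto
  moreover have "inj_on f {..<count_terms_le f N}"
    by (metis assms strict_mono_imp_inj_on inj_on_subset subset_UNIV)
  ultimately show ?thesis by (simp add: sum.reindex)
qed

section \<open>Chebyshev's upper bound\<close>

definition chebyshev_theta :: "nat \<Rightarrow> real" where
  "chebyshev_theta n = (\<Sum>p\<in>{p. prime p \<and> p \<le> n}. ln (real p))"

lemma prod_primes_dvd:
  fixes N :: nat
  assumes "finite P" "\<And>p. p \<in> P \<Longrightarrow> prime p" "\<And>p. p \<in> P \<Longrightarrow> p dvd N"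
  shows "\<Prod>P dvd N"
  using assms
proof (induction P rule: finite_induct)
  case (insert p F)
  have "coprime p (\<Prod>F)"
    by (rule prod_coprime_right) (use insert in \<open>auto intro: primes_coprime\<close>)
  then show ?case using insert by (simp add: divides_mult)
qed simp

lemma prod_primes_dvd_central_binomial:
  "\<Prod>{p. prime p \<and> m < p \<and> p \<le> 2*m} dvd (2*m choose m)"
proof (rule prod_primes_dvd)
  fix p assume p: "p \<in> {p. prime p \<and> m < p \<and> p \<le> 2*m}"
  then have "prime p" by simp
  have "p dvd fact m * fact m * (2*m choose m)"
    using p prime_dvd_fact_iff[OF \<open>prime p\<close>] binomial_fact_lemma[of m "2*m"] by simp
  moreover have "\<not> p dvd fact m" using p prime_dvd_fact_iff[OF \<open>prime p\<close>] by simp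
  ultimately show "p dvd (2*m choose m)" using \<open>prime p\<close> by (simp add: prime_dvd_mult_iff)
qed auto

lemma chebyshev_theta_double_le: "chebyshev_theta (2*m) - chebyshev_theta m \<le> 2 * m * ln 2"
proof -
  define P where "P = {p. prime p \<and> m < p \<and> p \<le> 2*m}"
  have split: "{p. prime p \<and> p \<le> 2*m} = {p. prime p \<and> p \<le> m} \<union> P"
    unfolding P_def by auto
  have "chebyshev_theta (2*m) = chebyshev_theta m + (\<Sum>p\<in>P. ln (real p))"
    unfolding chebyshev_theta_def split by (rule sum.union_disjoint) (auto simp: P_def)
  also have "(\<Sum>p\<in>P. ln (real p)) = ln (real (\<Prod>P))"
    using ln_prod[of P real] finite_subset[of P "{..2*m}"] by (force simp: P_def)
  also have "\<dots> \<le> ln (real (2*m choose m))"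
  proof -
    have "\<Prod>P \<le> (2*m choose m)"
      unfolding P_def by (rule dvd_imp_le[OF prod_primes_dvd_central_binomial]) simp
    moreover have "\<Prod>P > 0" by (rule prod_pos) (auto simp: P_def prime_gt_0_nat)
    ultimately show ?thesis
      by (metis ln_le_cancel_iff of_nat_0_less_iff of_nat_le_iff order_less_le_trans)
  qed
  also have "\<dots> \<le> ln (2 ^ (2*m))"
  proof -
    have "real (2*m choose m) \<le> 2 ^ (2*m)"
      using binomial_le_pow2[of "2*m" m] by (metis of_nat_le_iff of_nat_numeral of_nat_power)
    then show ?thesis by simp
  qed
  also have "\<dots> = 2 * m * ln 2" by (simp add: ln_realpow)
  finally show ?thesis by simp
qed

lemma chebyshev_theta_mono: "m \<le> n \<Longrightarrow> chebyshev_theta m \<le> chebyshev_theta n"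
  unfolding chebyshev_theta_def by (rule sum_mono2) (auto simp: prime_ge_1_nat)

lemma chebyshev_theta_le_trivial: "chebyshev_theta n \<le> n * ln n"
proof -
  have "chebyshev_theta n \<le> (\<Sum>p\<in>{p. prime p \<and> p \<le> n}. ln (real n))"
    unfolding chebyshev_theta_def
    by (intro sum_mono) (metis ln_le_cancel_iff mem_Collect_eq of_nat_0_less_iff of_nat_le_iff
        order_less_le_trans prime_gt_0_nat)
  also have "\<dots> = card {p. prime p \<and> p \<le> n} * ln n" by simp
  also have "\<dots> \<le> n * ln n"
  proof (rule mult_right_mono)
    have "card {p. prime p \<and> p \<le> n} \<le> card {1..n}"
      by (rule card_mono) (auto simp: prime_gt_0_nat Suc_le_eq)
    then show "real (card {p. prime p \<and> p \<le> n}) \<le> real n" by simp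
  qed (cases "n = 0"; simp)
  finally show ?thesis .
qed

theorem chebyshev_theta_le: "chebyshev_theta n \<le> 4 * ln 2 * n"
proof (induction n rule: less_induct)
  case (less n)
  show ?case
  proof (cases "n \<le> 2")
    case True
    have "chebyshev_theta n \<le> n * ln n" by (rule chebyshev_theta_le_trivial)
    also have "\<dots> \<le> n * ln 2"
      using True by (cases "n = 0") (auto intro!: mult_left_mono)
    also have "\<dots> \<le> 4 * ln 2 * n" by simp
    finally show ?thesis .
  next
    case False
    define m where "m = (n + 1) div 2"
    have m: "m < n" "n \<le> 2*m" "2 * real m \<le> n + 1" using False unfolding m_def by linarith+
    have "chebyshev_theta n \<le> chebyshev_theta (2*m)" using m by (intro chebyshev_theta_mono)
    also have "\<dots> \<le> 4 * ln 2 * m + 2 * m * ln 2"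
      using chebyshev_theta_double_le[of m] less.IH[OF m(1)] by linarith
    also have "\<dots> = 3 * ln 2 * (2 * m)" by simp
    also have "\<dots> \<le> 3 * ln 2 * (n + 1)" using m(3) by (intro mult_left_mono) auto
    also have "\<dots> \<le> 4 * ln 2 * n" using False by (simp add: algebra_simps)
    finally show ?thesis .
  qed
qed

section \<open>Mertens' first theorem\<close>

definition mertens_sum :: "nat \<Rightarrow> real" where
  "mertens_sum n = (\<Sum>p\<in>{p. prime p \<and> p \<le> n}. ln (real p) / real p)"

lemma card_multiples_atLeastAtMost:
  assumes "d > 0"
  shows "card {m\<in>{1..n}. d dvd m} = n div d"
proof -
  have "{m\<in>{1..n}. d dvd m} = (\<lambda>k. d * k) ` {1..n div d}"
  proof
    show "{m\<in>{1..n}. d dvd m} \<subseteq> (\<lambda>k. d * k) ` {1..n div d}"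
    proof
      fix m assume m: "m \<in> {m\<in>{1..n}. d dvd m}"
      then obtain k where k: "m = d * k" by auto
      with m assms have "1 \<le> k" "k \<le> n div d"
        by (auto simp: less_eq_div_iff_mult_less_eq mult.commute intro: Nat.gr0I)
      with k show "m \<in> (\<lambda>k. d * k) ` {1..n div d}" by auto
    qed
  qed (use assms in \<open>auto simp: less_eq_div_iff_mult_less_eq mult.commute\<close>)
  moreover have "inj_on (\<lambda>k. d * k) {1..n div d}" using assms by (auto simp: inj_on_def)
  ultimately show ?thesis by (simp add: card_image)
qed

lemma ln_fact_eq_sum_mangoldt: "ln (fact n :: real) = (\<Sum>d\<in>{1..n}. mangoldt d * real (n div d))"
proof -
  have "ln (fact n :: real) = ln (\<Prod>m\<in>{1..n}. real m)" by (simp add: fact_prod)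
  also have "\<dots> = (\<Sum>m\<in>{1..n}. ln (real m))" by (subst ln_prod) auto
  also have "\<dots> = (\<Sum>m\<in>{1..n}. \<Sum>d\<in>{d\<in>{1..n}. d dvd m}. mangoldt d)"
  proof (rule sum.cong[OF refl])
    fix m assume m: "m \<in> {1..n}"
    then have "{d. d dvd m} = {d\<in>{1..n}. d dvd m}"
      by (auto intro: Nat.gr0I dest: dvd_imp_le)
    then show "ln (real m) = (\<Sum>d\<in>{d\<in>{1..n}. d dvd m}. mangoldt d)"
      using mangoldt_sum[of m, where 'a=real] m by simp
  qed
  also have "\<dots> = (\<Sum>d\<in>{1..n}. \<Sum>m\<in>{m\<in>{1..n}. d dvd m}. mangoldt d)"
    by (rule sum.swap_restrict) auto
  also have "\<dots> = (\<Sum>d\<in>{1..n}. mangoldt d * real (n div d))"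
    using card_multiples_atLeastAtMost by (intro sum.cong refl) simp
  finally show ?thesis .
qed

lemma power_le_fact_mult_exp: "real n ^ n \<le> fact n * exp (real n)"
proof (induction n)
  case (Suc n)
  have "(real n + 1) ^ n \<le> exp 1 * real n ^ n"
  proof (cases "n = 0")
    case False
    then have "(real n + 1) ^ n = (1 + 1 / real n) ^ n * real n ^ n"
      by (simp add: field_simps flip: power_mult_distrib)
    also have "\<dots> \<le> exp 1 * real n ^ n"
      using exp_ge_one_plus_x_over_n_power_n[of n 1] False by (intro mult_right_mono) auto
    finally show ?thesis .
  qed simp
  then have "real (Suc n) ^ Suc n \<le> (real n + 1) * (exp 1 * real n ^ n)"
    by (simp add: add.commute mult_left_mono)
  also have "\<dots> \<le> (real n + 1) * (exp 1 * (fact n * exp (real n)))"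
    using Suc.IH by (intro mult_left_mono) auto
  also have "\<dots> = fact (Suc n) * exp (real (Suc n))"
    by (simp add: exp_add algebra_simps)
  finally show ?case .
qed simp

lemma ln_fact_ge: "real n * ln (real n) - real n \<le> ln (fact n :: real)"
proof (cases "n = 0")
  case False
  then have "ln (real n ^ n) \<le> ln (fact n * exp (real n))"
    using power_le_fact_mult_exp[of n] by (subst ln_le_cancel_iff) auto
  then show ?thesis using False by (simp add: ln_realpow ln_mult)
qed simp

lemma ln_fact_le: "ln (fact n :: real) \<le> real n * ln (real n)"
proof (cases "n = 0")
  case False
  have "(fact n :: real) \<le> real (n ^ n)" by (rule fact_le_power)
  then have "ln (fact n :: real) \<le> ln (real n ^ n)" using False by (subst ln_le_cancel_iff) auto
  then show ?thesis using False by (simp add: ln_realpow)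
qed simp

lemma sum_power_from_2_le:
  fixes x :: real
  assumes "0 \<le> x" "x \<le> 1/2"
  shows "(\<Sum>k=2..n. x ^ k) \<le> 2 * x^2"
proof (cases "n < 2")
  case False
  have "(1 - x) * (\<Sum>k=2..n. x ^ k) = x^2 - x ^ Suc n"
    using False by (intro sum_gp_multiplied) simp
  also have "\<dots> \<le> x^2" using assms by simp
  also have "\<dots> \<le> (1 - x) * (2 * x^2)"
  proof -
    have "0 \<le> x^2 * (1 - 2 * x)" using assms by simp
    then show ?thesis by (simp add: algebra_simps)
  qed
  finally show ?thesis using assms by (simp add: mult_le_cancel_left_pos)
qed (use assms in simp)

lemma summable_ln_over_square: "summable (\<lambda>n::nat. ln (real n) / real n ^ 2)"
proof (rule summable_comparison_test_bigo)
  show "summable (\<lambda>n. norm (real n powr (-3/2)))"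
    using summable_real_powr_iff[of "-3/2"] by simp
  show "(\<lambda>n::nat. ln (real n) / real n ^ 2) \<in> O(\<lambda>n. real n powr (-3/2))"
    by real_asymp
qed

lemma ln_over_square_nonneg: "0 \<le> ln (real m) / real m ^ 2"
  by (cases "m = 0") auto

lemma nonprime_primepow_mem_powers:
  assumes "d \<in> {1..n}" "\<not> prime d" "primepow d"
  shows "d \<in> (\<lambda>(p, k). p ^ k) ` ({p. prime p \<and> p \<le> n} \<times> {2..n})"
proof -
  obtain p k where pk: "prime p" "k > 0" "d = p ^ k" using assms(3) unfolding primepow_def by auto
  have "k \<noteq> 1" using assms(2) pk by auto
  have "p \<le> p ^ k" using pk prime_gt_0_nat[of p] by (simp add: self_le_power)
  moreover have "k < p ^ k"
  proof -
    have "k < 2 ^ k" by (rule less_exp)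
    also have "2 ^ k \<le> p ^ k" using prime_ge_2_nat[OF pk(1)] by (rule power_mono) simp
    finally show ?thesis .
  qed
  ultimately have "p \<in> {p. prime p \<and> p \<le> n}" "k \<in> {2..n}"
    using assms(1) pk \<open>k \<noteq> 1\<close> by auto
  then show ?thesis using pk by auto
qed

lemma sum_mangoldt_nonprime_le:
  "(\<Sum>d\<in>{d\<in>{1..n}. \<not> prime d}. mangoldt d / real d)
     \<le> 2 * (\<Sum>m. ln (real m) / real m ^ 2)"
proof -
  define P where "P = {p. prime p \<and> p \<le> n}"
  define D where "D = {d\<in>{1..n}. \<not> prime d \<and> primepow d}"
  have "(\<Sum>d\<in>{d\<in>{1..n}. \<not> prime d}. mangoldt d / real d) = (\<Sum>d\<in>D. mangoldt d / real d)"
    unfolding D_def by (rule sum.mono_neutral_right) (auto simp: mangoldt_def)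
  also have "\<dots> \<le> (\<Sum>d\<in>(\<lambda>(p,k). p ^ k) ` (P \<times> {2..n}). mangoldt d / real d)"
    using nonprime_primepow_mem_powers[of _ n] mangoldt_nonneg
    by (intro sum_mono2) (auto simp: D_def P_def)
  also have "\<dots> = (\<Sum>(p,k)\<in>P \<times> {2..n}. mangoldt (p ^ k) / real (p ^ k))"
    by (subst sum.reindex) (auto simp: inj_on_def P_def prime_power_inj'' case_prod_unfold)
  also have "\<dots> = (\<Sum>p\<in>P. ln (real p) * (\<Sum>k=2..n. (1 / real p) ^ k))"
    unfolding sum.cartesian_product[symmetric]
    by (auto simp: P_def power_divide sum_distrib_left intro!: sum.cong)
  also have "\<dots> \<le> (\<Sum>p\<in>P. ln (real p) * (2 * (1 / real p)^2))"
  proof (rule sum_mono)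
    fix p assume "p \<in> P"
    then have "prime p" unfolding P_def by simp
    then have "real p \<ge> 2" using prime_ge_2_nat by fastforce
    with \<open>prime p\<close>
    show "ln (real p) * (\<Sum>k=2..n. (1 / real p) ^ k) \<le> ln (real p) * (2 * (1 / real p)^2)"
      by (intro mult_left_mono sum_power_from_2_le) (auto simp: prime_ge_1_nat)
  qed
  also have "\<dots> = 2 * (\<Sum>p\<in>P. ln (real p) / real p ^ 2)"
    by (simp add: sum_distrib_left power_divide mult.commute mult.left_commute)
  also have "(\<Sum>p\<in>P. ln (real p) / real p ^ 2) \<le> (\<Sum>m\<le>n. ln (real m) / real m ^ 2)"
    unfolding P_def by (rule sum_mono2) (auto simp: ln_over_square_nonneg)
  also have "\<dots> \<le> (\<Sum>m. ln (real m) / real m ^ 2)"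
    by (rule sum_le_suminf[OF summable_ln_over_square]) (auto simp: ln_over_square_nonneg)
  finally show ?thesis by simp
qed

lemma real_div_minus_one_le: "p > 0 \<Longrightarrow> real n / real p - 1 \<le> real (n div p)"
proof -
  assume p: "p > 0"
  have "real n = real p * real (n div p) + real (n mod p)"
    by (metis div_mult_mod_eq of_nat_add of_nat_mult mult.commute)
  moreover have "real (n mod p) < real p" using p by simp
  ultimately have "real n < real p * (real (n div p) + 1)" by (simp add: algebra_simps)
  then show ?thesis using p by (simp add: field_simps)
qed

lemma mertens_sum_le:
  assumes "n \<ge> 1"
  shows "mertens_sum n \<le> ln (real n) + 4 * ln 2"
proof -
  define P where "P = {p. prime p \<and> p \<le> n}"
  have "real n * mertens_sum n - chebyshev_theta n = (\<Sum>p\<in>P. ln (real p) * (real n / real p - 1))"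
    unfolding mertens_sum_def chebyshev_theta_def P_def[symmetric]
    by (simp add: sum_distrib_left sum_subtractf algebra_simps)
  also have "\<dots> \<le> (\<Sum>p\<in>P. mangoldt p * real (n div p))"
  proof (rule sum_mono)
    fix p assume "p \<in> P"
    then have "prime p" unfolding P_def by simp
    moreover have "real n / real p - 1 \<le> real (n div p)"
      using \<open>prime p\<close> by (simp add: real_div_minus_one_le prime_gt_0_nat)
    ultimately show "ln (real p) * (real n / real p - 1) \<le> mangoldt p * real (n div p)"
      using prime_ge_1_nat[OF \<open>prime p\<close>] by (simp add: mult_left_mono)
  qed
  also have "\<dots> \<le> (\<Sum>d\<in>{1..n}. mangoldt d * real (n div d))"
    by (rule sum_mono2) (auto simp: P_def prime_gt_0_nat Suc_le_eq mangoldt_nonneg)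
  also have "\<dots> \<le> real n * ln (real n)"
    using ln_fact_le by (simp add: ln_fact_eq_sum_mangoldt)
  finally have "real n * mertens_sum n \<le> real n * ln (real n) + chebyshev_theta n" by simp
  also have "\<dots> \<le> real n * (ln (real n) + 4 * ln 2)"
    using chebyshev_theta_le[of n] by (simp add: algebra_simps)
  finally show ?thesis using assms by simp
qed

lemma mertens_sum_ge:
  assumes "n \<ge> 1"
  shows "ln (real n) - 1 - 2 * (\<Sum>m. ln (real m) / real m ^ 2) \<le> mertens_sum n"
proof -
  have split: "{1..n} = {p. prime p \<and> p \<le> n} \<union> {d\<in>{1..n}. \<not> prime d}"
    using prime_ge_1_nat by auto
  have "real n * ln (real n) - real n \<le> (\<Sum>d\<in>{1..n}. mangoldt d * real (n div d))"
    using ln_fact_ge by (simp add: ln_fact_eq_sum_mangoldt)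
  also have "\<dots> \<le> (\<Sum>d\<in>{1..n}. mangoldt d * (real n / real d))"
    by (intro sum_mono mult_left_mono of_nat_div_le_of_nat mangoldt_nonneg)
  also have "\<dots> = real n * (\<Sum>d\<in>{1..n}. mangoldt d / real d)"
    by (simp add: sum_distrib_left mult.commute mult.left_commute)
  also have "(\<Sum>d\<in>{1..n}. mangoldt d / real d)
      = mertens_sum n + (\<Sum>d\<in>{d\<in>{1..n}. \<not> prime d}. mangoldt d / real d)"
    unfolding mertens_sum_def by (subst split, subst sum.union_disjoint) auto
  finally have "real n * (ln (real n) - 1)
      \<le> real n * (mertens_sum n + (\<Sum>d\<in>{d\<in>{1..n}. \<not> prime d}. mangoldt d / real d))"
    by (simp add: right_diff_distrib)
  then have "ln (real n) - 1
      \<le> mertens_sum n + (\<Sum>d\<in>{d\<in>{1..n}. \<not> prime d}. mangoldt d / real d)"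
    by (rule mult_left_le_imp_le) (use assms in simp)
  then show ?thesis using sum_mangoldt_nonprime_le[of n] by simp
qed

theorem mertens_sum_bounded: "\<exists>C. \<forall>n\<ge>1. \<bar>mertens_sum n - ln (real n)\<bar> \<le> C"
proof -
  define S where "S = (\<Sum>m. ln (real m) / real m ^ 2)"
  have "\<bar>mertens_sum n - ln (real n)\<bar> \<le> 4 * ln 2 + 1 + 2 * \<bar>S\<bar>" if "n \<ge> 1" for n
    using mertens_sum_le[OF that] mertens_sum_ge[OF that, folded S_def] abs_ge_self[of S]
      ln_gt_zero[of "2::real"] unfolding abs_le_iff by linarith
  then show ?thesis by blast
qed

section \<open>Mertens' second theorem\<close>

definition prime_recip_sum :: "nat \<Rightarrow> real" where
  "prime_recip_sum n = (\<Sum>p\<in>{p. prime p \<and> p \<le> n}. 1 / real p)"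

lemma partial_sums_limit_telescoping_bound:
  fixes f h :: "nat \<Rightarrow> real"
  assumes bound: "\<And>k. k \<ge> K \<Longrightarrow> \<bar>f k\<bar> \<le> h k - h (Suc k)" and "h \<longlonglongrightarrow> 0"
  shows "\<exists>L. \<forall>N\<ge>K. \<bar>(\<Sum>k=K..<N. f k) - L\<bar> \<le> h N"
proof -
  define g where "g k = f (k + K)" for k
  define H where "H k = h (k + K)" for k
  have "H \<longlonglongrightarrow> 0" unfolding H_def using assms(2) by (rule LIMSEQ_ignore_initial_segment)
  have g_le: "\<bar>g k\<bar> \<le> H k - H (Suc k)" for k
    unfolding g_def H_def using bound[of "k + K"] by simp
  have telescope: "(\<lambda>k. H (k + n) - H (Suc (k + n))) sums H n" for n
    using telescope_sums'[OF LIMSEQ_ignore_initial_segment[OF \<open>H \<longlonglongrightarrow> 0\<close>, of n]] by simp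
  have "summable g"
    by (rule summable_comparison_test[of _ "\<lambda>k. H k - H (Suc k)"])
      (use g_le sums_summable[OF telescope[of 0]] in auto)
  have "\<bar>(\<Sum>k=K..<N. f k) - suminf g\<bar> \<le> h N" if "N \<ge> K" for N
  proof -
    define n where "n = N - K"
    have "(\<Sum>k=K..<N. f k) = (\<Sum>k<n. g k)"
      using sum.atLeastLessThan_shift_0[of f K N] unfolding n_def g_def
      by (simp add: comp_def add.commute atLeast0LessThan)
    moreover have "suminf g = (\<Sum>k. g (k + n)) + (\<Sum>k<n. g k)"
      by (rule suminf_split_initial_segment[OF \<open>summable g\<close>])
    moreover have "\<bar>\<Sum>k. g (k + n)\<bar> \<le> (\<Sum>k. H (k + n) - H (Suc (k + n)))"
      using norm_suminf_le[of "\<lambda>k. g (k + n)" "\<lambda>k. H (k + n) - H (Suc (k + n))"]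
        g_le sums_summable[OF telescope[of n]] by auto
    moreover have "(\<Sum>k. H (k + n) - H (Suc (k + n))) = h N"
      using sums_unique[OF telescope[of n]] that unfolding H_def n_def by simp
    ultimately show ?thesis by linarith
  qed
  then show ?thesis by blast
qed

lemma primes_atMost_Suc:
  "{p. prime p \<and> p \<le> Suc n} =
     (if prime (Suc n) then insert (Suc n) {p. prime p \<and> p \<le> n} else {p. prime p \<and> p \<le> n})"
  by (auto simp: le_Suc_eq)

lemma mertens_sum_Suc:
  "mertens_sum (Suc n) = mertens_sum n + (if prime (Suc n) then ln (real (Suc n)) / real (Suc n) else 0)"
  unfolding mertens_sum_def by (subst primes_atMost_Suc) auto

lemma prime_recip_sum_Suc:
  "prime_recip_sum (Suc n) = prime_recip_sum n + (if prime (Suc n) then 1 / real (Suc n) else 0)"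
  unfolding prime_recip_sum_def by (subst primes_atMost_Suc) auto

lemma prime_recip_sum_by_parts:
  assumes "N \<ge> 2"
  shows "prime_recip_sum N = mertens_sum N / ln (real N)
           + (\<Sum>k=2..<N. mertens_sum k * (1 / ln (real k) - 1 / ln (real (Suc k))))"
  using assms
proof (induction N rule: nat_induct_at_least)
  case base
  have "p = 2" if "prime p" "p \<le> 2" for p :: nat using that prime_gt_1_nat[of p] by linarith
  then have "{p. prime p \<and> p \<le> 2} = {2::nat}" by auto
  then show ?case by (simp add: prime_recip_sum_def mertens_sum_def)
next
  case (Suc N)
  have "ln (real (Suc N)) > 0" using Suc.hyps by simp
  then have "mertens_sum (Suc N) / ln (real (Suc N)) =
      mertens_sum N / ln (real (Suc N)) + (if prime (Suc N) then 1 / real (Suc N) else 0)"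
    by (subst mertens_sum_Suc) (auto simp: add_divide_distrib)
  then show ?case
    using Suc prime_recip_sum_Suc[of N] by (simp add: algebra_simps)
qed

lemma one_minus_ln_ratio_bounds:
  fixes k :: nat
  assumes k: "k \<ge> 2"
  defines "u \<equiv> 1 - ln (real k) / ln (real (Suc k))"
  shows "0 \<le> u" "u \<le> 1/2" "u \<le> 1 / real k"
    and "ln (ln (real (Suc k))) - ln (ln (real k)) = - ln (1 - u)"
proof -
  have "ln (real k) > 0" "ln (real k) < ln (real (Suc k))" using k by simp_all
  have "ln (real (Suc k)) \<ge> 1"
    using exp_le k ln_ge_iff[of "real (Suc k)" 1] by simp
  have u: "u = (ln (real (Suc k)) - ln (real k)) / ln (real (Suc k))"
    unfolding u_def using k \<open>ln (real k) > 0\<close> \<open>ln (real k) < ln (real (Suc k))\<close>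
    by (simp add: diff_divide_distrib)
  show "0 \<le> u" unfolding u using \<open>ln (real k) > 0\<close> \<open>ln (real k) < ln (real (Suc k))\<close> by simp
  have "Suc k \<le> k * k" using mult_le_mono1[OF k, of k] k by linarith
  then have "real (Suc k) \<le> real k ^ 2" by (metis of_nat_le_iff of_nat_mult power2_eq_square)
  then have "ln (real (Suc k)) \<le> ln (real k ^ 2)" using k by (subst ln_le_cancel_iff) auto
  then have "ln (real (Suc k)) \<le> 2 * ln (real k)" using k by (simp add: ln_realpow)
  then show "u \<le> 1/2" unfolding u using \<open>ln (real k) > 0\<close> by (simp add: divide_le_eq)
  have "ln (real (Suc k)) - ln (real k) = ln (1 + 1 / real k)"
    using k ln_div[of "real (Suc k)" "real k"] by (simp add: field_simps)
  also have "\<dots> \<le> 1 / real k" by (rule ln_add_one_self_le_self) simp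
  finally have "u \<le> 1 / real k / 1"
    unfolding u using \<open>ln (real (Suc k)) \<ge> 1\<close> \<open>ln (real k) < ln (real (Suc k))\<close>
    by (intro frac_le) auto
  then show "u \<le> 1 / real k" by simp
  have "1 - u = ln (real k) / ln (real (Suc k))" unfolding u_def by simp
  then show "ln (ln (real (Suc k))) - ln (ln (real k)) = - ln (1 - u)"
    using \<open>ln (real k) > 0\<close> \<open>ln (real k) < ln (real (Suc k))\<close> by (simp add: ln_div)
qed

lemma minus_ln_one_minus_bounds:
  fixes u :: real
  assumes "0 \<le> u" "u \<le> 1/2"
  shows "0 \<le> - ln (1 - u) - u" "- ln (1 - u) - u \<le> 2 * u^2"
proof -
  show "0 \<le> - ln (1 - u) - u" using ln_le_minus_one[of "1 - u"] assms by simp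
  have "- ln (1 - u) = ln (1 / (1 - u))" using assms by (simp add: ln_div)
  also have "\<dots> \<le> 1 / (1 - u) - 1" using assms by (intro ln_le_minus_one) auto
  finally have "- ln (1 - u) - u \<le> u^2 / (1 - u)"
    using assms by (simp add: field_simps power2_eq_square)
  also have "\<dots> \<le> u^2 / (1/2)" using assms by (intro divide_left_mono) auto
  finally show "- ln (1 - u) - u \<le> 2 * u^2" by simp
qed

lemma two_over_square_le_telescoping:
  fixes x :: real
  assumes "x > 1"
  shows "2 * (1 / x)^2 \<le> 2 / (x - 1) - 2 / x"
proof -
  have "2 / (x - 1) - 2 / x = 2 / (x * (x - 1))" using assms by (simp add: field_simps)
  moreover have "2 / (x * x) \<le> 2 / (x * (x - 1))" using assms by (intro divide_left_mono) auto
  ultimately show ?thesis by (simp add: power2_eq_square)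
qed

lemma ln_ln_Suc_diff_bounds:
  fixes k :: nat
  assumes "k \<ge> 2"
  defines "v \<equiv> ln (ln (real (Suc k))) - ln (ln (real k))
                - ln (real k) * (1 / ln (real k) - 1 / ln (real (Suc k)))"
  shows "0 \<le> v" "v \<le> 2 / (real k - 1) - 2 / real k"
proof -
  define u where "u = 1 - ln (real k) / ln (real (Suc k))"
  note u_bounds = one_minus_ln_ratio_bounds[OF assms(1), folded u_def]
  have "ln (real k) > 0" using assms by simp
  then have "v = - ln (1 - u) - u"
    unfolding v_def u_bounds(4) by (simp add: u_def right_diff_distrib)
  then show "0 \<le> v" using minus_ln_one_minus_bounds(1)[OF u_bounds(1,2)] by simp
  have "v \<le> 2 * u^2" using minus_ln_one_minus_bounds(2)[OF u_bounds(1,2)] \<open>v = _\<close> by simp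
  also have "\<dots> \<le> 2 * (1 / real k)^2" using u_bounds(1,3) by (intro mult_left_mono power_mono) auto
  also have "\<dots> \<le> 2 / (real k - 1) - 2 / real k"
    using assms by (intro two_over_square_le_telescoping) simp
  finally show "v \<le> 2 / (real k - 1) - 2 / real k" .
qed

text \<open>The discrete analogue of \<open>\<integral> dt / (t ln t) = ln ln t\<close>, with a summable error.\<close>

lemma sum_ln_mult_inverse_ln_diff_asymp:
  "\<exists>L. \<forall>N\<ge>2. \<bar>(\<Sum>k=2..<N. ln (real k) * (1 / ln (real k) - 1 / ln (real (Suc k))))
                 - ln (ln (real N)) - L\<bar> \<le> 2 / (real N - 1)"
proof -
  define v where "v k = ln (ln (real (Suc k))) - ln (ln (real k))
    - ln (real k) * (1 / ln (real k) - 1 / ln (real (Suc k)))" for k :: nat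
  have "\<bar>v k\<bar> \<le> 2 / (real k - 1) - 2 / real (Suc k - 1)" if "k \<ge> 2" for k
    using ln_ln_Suc_diff_bounds[OF that] unfolding v_def by simp
  moreover have "(\<lambda>k. 2 / (real k - 1)) \<longlonglongrightarrow> 0" by real_asymp
  ultimately obtain L where L: "\<And>N. N \<ge> 2 \<Longrightarrow> \<bar>(\<Sum>k=2..<N. v k) - L\<bar> \<le> 2 / (real N - 1)"
    using partial_sums_limit_telescoping_bound[of 2 v "\<lambda>k. 2 / (real k - 1)"] by auto
  have "(\<Sum>k=2..<N. ln (real k) * (1 / ln (real k) - 1 / ln (real (Suc k))))
      = ln (ln (real N)) - ln (ln 2) - (\<Sum>k=2..<N. v k)" if "N \<ge> 2" for N
    using sum_Suc_diff'[OF that, of "\<lambda>k. ln (ln (real k))"] unfolding v_def by (simp add: sum_subtractf)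
  then have "\<bar>(\<Sum>k=2..<N. ln (real k) * (1 / ln (real k) - 1 / ln (real (Suc k))))
      - ln (ln (real N)) - (- ln (ln 2) - L)\<bar> \<le> 2 / (real N - 1)" if "N \<ge> 2" for N
    using L[OF that] that by (simp add: abs_minus_commute)
  then show ?thesis by blast
qed

lemma inverse_le_inverse_ln:
  fixes x :: real
  assumes "x > 1"
  shows "1 / x \<le> 1 / ln x"
  using assms ln_le_minus_one[of x] by (intro divide_left_mono) auto

theorem prime_recip_sum_asymp:
  "\<exists>B E. \<forall>N\<ge>2. \<bar>prime_recip_sum N - ln (ln (real N)) - B\<bar> \<le> E / ln (real N)"
proof -
  obtain C where C: "\<And>n. n \<ge> 1 \<Longrightarrow> \<bar>mertens_sum n - ln (real n)\<bar> \<le> C"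
    using mertens_sum_bounded by blast
  define \<delta> where "\<delta> k = 1 / ln (real k) - 1 / ln (real (Suc k))" for k :: nat
  define R where "R k = mertens_sum k - ln (real k)" for k :: nat
  have "\<bar>R k * \<delta> k\<bar> \<le> C / ln (real k) - C / ln (real (Suc k))" if "k \<ge> 2" for k
  proof -
    have "\<delta> k \<ge> 0" unfolding \<delta>_def using that by (simp add: frac_le)
    then have "\<bar>R k * \<delta> k\<bar> \<le> C * \<delta> k"
      using C[of k] that unfolding R_def by (simp add: abs_mult mult_right_mono)
    then show ?thesis unfolding \<delta>_def by (simp add: algebra_simps)
  qed
  moreover have "(\<lambda>k. C / ln (real k)) \<longlonglongrightarrow> 0" by real_asymp
  ultimately obtain L1 where L1: "\<And>N. N \<ge> 2 \<Longrightarrow> \<bar>(\<Sum>k=2..<N. R k * \<delta> k) - L1\<bar> \<le> C / ln (real N)"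
    using partial_sums_limit_telescoping_bound[of 2 "\<lambda>k. R k * \<delta> k" "\<lambda>k. C / ln (real k)"] by blast
  obtain L2 where L2: "\<And>N. N \<ge> 2 \<Longrightarrow>
      \<bar>(\<Sum>k=2..<N. ln (real k) * \<delta> k) - ln (ln (real N)) - L2\<bar> \<le> 2 / (real N - 1)"
    using sum_ln_mult_inverse_ln_diff_asymp unfolding \<delta>_def by blast
  have "\<bar>prime_recip_sum N - ln (ln (real N)) - (1 + L2 + L1)\<bar> \<le> (2 * C + 2) / ln (real N)"
    if N: "N \<ge> 2" for N
  proof -
    have "ln (real N) > 0" using N by simp
    have "(\<Sum>k=2..<N. mertens_sum k * \<delta> k) = (\<Sum>k=2..<N. ln (real k) * \<delta> k) + (\<Sum>k=2..<N. R k * \<delta> k)"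
      unfolding R_def by (simp add: sum.distrib[symmetric] algebra_simps)
    moreover have "mertens_sum N / ln (real N) = 1 + R N / ln (real N)"
      unfolding R_def using \<open>ln (real N) > 0\<close> by (simp add: diff_divide_distrib)
    moreover have "\<bar>R N / ln (real N)\<bar> \<le> C / ln (real N)"
      using C[of N] N \<open>ln (real N) > 0\<close> unfolding R_def by (simp add: abs_div divide_right_mono)
    moreover have "2 / (real N - 1) \<le> 2 / ln (real N)"
      using N \<open>ln (real N) > 0\<close> ln_le_minus_one[of "real N"] by (intro divide_left_mono) auto
    ultimately have "\<bar>prime_recip_sum N - ln (ln (real N)) - (1 + L2 + L1)\<bar>
        \<le> C / ln (real N) + 2 / ln (real N) + C / ln (real N)"
      using prime_recip_sum_by_parts[OF N, folded \<delta>_def] L1[OF N] L2[OF N] by linarith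
    then show ?thesis by (simp add: add_divide_distrib)
  qed
  then show ?thesis by blast
qed

section \<open>Primes with indices in an arithmetic progression\<close>

lemma strict_mono_progression:
  fixes P :: "nat \<Rightarrow> 'a::order" and r s :: nat
  assumes "strict_mono P" "r \<ge> 1"
  shows "strict_mono (\<lambda>j. P (s + j * r))"
proof (rule strict_monoI)
  fix i j :: nat assume "i < j"
  then have "s + i * r < s + j * r" using assms(2) by simp
  then show "P (s + i * r) < P (s + j * r)" using strict_monoD[OF assms(1)] by blast
qed

lemma count_terms_le_progression:
  fixes P :: "nat \<Rightarrow> nat"
  assumes P: "strict_mono P" and r: "r \<ge> 1" and N: "P s \<le> N"
  defines "J \<equiv> count_terms_le (\<lambda>j. P (s + j * r)) N" and "n \<equiv> count_terms_le P N"
  shows "0 < J" "s + (J - 1) * r < n" "n \<le> s + J * r"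
proof -
  note Q_iff = less_count_terms_le_iff[OF strict_mono_progression[OF P r, of s], of _ N, folded J_def]
  note P_iff = less_count_terms_le_iff[OF P, of _ N, folded n_def]
  show "0 < J" using Q_iff[of 0] N by simp
  then show "s + (J - 1) * r < n" using Q_iff[of "J - 1"] P_iff by simp
  show "n \<le> s + J * r" using Q_iff[of J] P_iff[of "s + J * r"] by simp
qed

lemma prime_recip_sum_eq_sum_nth_prime:
  "prime_recip_sum N = (\<Sum>k<count_terms_le nth_prime N. 1 / real (nth_prime k))"
proof -
  have "{p. prime p \<and> p \<le> N} = {p\<in>range nth_prime. p \<le> N}" by (simp add: range_nth_prime)
  then show ?thesis
    unfolding prime_recip_sum_def by (simp add: sum_terms_le_strict_mono[OF strict_mono_nth_prime])
qed

lemma sum_blocks_progression: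
  fixes b :: "nat \<Rightarrow> 'a::comm_monoid_add" and J r s :: nat
  shows "(\<Sum>j<J. \<Sum>t<r. b (s + j * r + t)) = (\<Sum>k=s..<s + J * r. b k)"
proof (induction J)
  case (Suc J)
  have "{s..<s + Suc J * r} = {s..<s + J * r} \<union> {s + J * r..<s + J * r + r}" by auto
  then have "(\<Sum>k=s..<s + Suc J * r. b k) = (\<Sum>k=s..<s + J * r. b k) + (\<Sum>k=s + J * r..<s + J * r + r. b k)"
    by (simp add: sum.union_disjoint ivl_disj_int)
  also have "(\<Sum>k=s + J * r..<s + J * r + r. b k) = (\<Sum>t<r. b (s + J * r + t))"
    using sum.atLeastLessThan_shift_0[of b "s + J * r" "s + J * r + r"]
    by (simp add: comp_def atLeast0LessThan add.commute)
  finally show ?case using Suc by simp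
qed simp

lemma decseq_block_sums_limit:
  fixes b :: "nat \<Rightarrow> real" and r s :: nat
  assumes "decseq b" "b \<longlonglongrightarrow> 0"
  shows "\<exists>D. \<forall>J. \<bar>(\<Sum>j<J. real r * b (s + j * r) - (\<Sum>t<r. b (s + j * r + t))) - D\<bar>
               \<le> real r * b (s + J * r)"
proof -
  define h where "h j = real r * b (s + j * r)" for j
  have b_nonneg: "0 \<le> b k" for k using decseq_ge[OF assms] .
  have "\<bar>h j - (\<Sum>t<r. b (s + j * r + t))\<bar> \<le> h j - h (Suc j)" for j
  proof -
    have "(\<Sum>t<r. b (s + Suc j * r)) \<le> (\<Sum>t<r. b (s + j * r + t))"
      by (intro sum_mono decseqD[OF assms(1)]) simp
    moreover have "(\<Sum>t<r. b (s + j * r + t)) \<le> (\<Sum>t<r. b (s + j * r))"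
      by (intro sum_mono decseqD[OF assms(1)]) simp
    ultimately show ?thesis unfolding h_def by simp
  qed
  moreover have "h \<longlonglongrightarrow> 0"
  proof (rule Lim_null_comparison)
    have "h j \<le> real r * b j" for j
    proof (cases "r = 0")
      case False
      then have "j \<le> s + j * r" by (simp add: trans_le_add2)
      then show ?thesis unfolding h_def by (intro mult_left_mono decseqD[OF assms(1)]) auto
    qed (simp add: h_def)
    then show "\<forall>\<^sub>F j in sequentially. norm (h j) \<le> real r * b j"
      using b_nonneg by (simp add: h_def)
    show "(\<lambda>j. real r * b j) \<longlonglongrightarrow> 0" using assms(2) by (rule tendsto_mult_right_zero)
  qed
  ultimately obtain D where "\<forall>J\<ge>0. \<bar>(\<Sum>j=0..<J. h j - (\<Sum>t<r. b (s + j * r + t))) - D\<bar> \<le> h J"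
    using partial_sums_limit_telescoping_bound[of 0 "\<lambda>j. h j - (\<Sum>t<r. b (s + j * r + t))" h] by blast
  then show ?thesis unfolding h_def by (auto simp: atLeast0LessThan)
qed

lemma decseq_inverse_nth_prime: "decseq (\<lambda>k. 1 / real (nth_prime k))"
  unfolding decseq_def
  by (auto intro!: divide_left_mono simp: strict_mono_less_eq[OF strict_mono_nth_prime] prime_gt_0_nat)

lemma inverse_nth_prime_tendsto_zero: "(\<lambda>k. 1 / real (nth_prime k)) \<longlonglongrightarrow> 0"
proof (rule Lim_null_comparison)
  show "\<forall>\<^sub>F k in sequentially. norm (1 / real (nth_prime k)) \<le> 1 / (real k + 2)"
  proof (intro always_eventually allI)
    fix k
    have "real (k + 2) \<le> real (nth_prime k)" using nth_prime_ge by (simp only: of_nat_le_iff)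
    then have "real k + 2 \<le> real (nth_prime k)" by simp
    then show "norm (1 / real (nth_prime k)) \<le> 1 / (real k + 2)" by (simp add: frac_le)
  qed
  show "(\<lambda>k. 1 / (real k + 2)) \<longlonglongrightarrow> 0" by real_asymp
qed

lemma sum_progression_split:
  fixes b :: "nat \<Rightarrow> real"
  assumes "s \<le> n" "n \<le> s + J * r"
  shows "real r * (\<Sum>j<J. b (s + j * r)) = (\<Sum>k<n. b k) - (\<Sum>k<s. b k) + (\<Sum>k=n..<s + J * r. b k)
           + (\<Sum>j<J. real r * b (s + j * r) - (\<Sum>t<r. b (s + j * r + t)))"
proof -
  have "(\<Sum>k<s. b k) + (\<Sum>k=s..<n. b k) = (\<Sum>k<n. b k)"
    using assms by (simp add: atLeast0LessThan[symmetric] sum.atLeastLessThan_concat)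
  moreover have "(\<Sum>k=s..<n. b k) + (\<Sum>k=n..<s + J * r. b k) = (\<Sum>k=s..<s + J * r. b k)"
    using assms by (simp add: sum.atLeastLessThan_concat)
  ultimately show ?thesis
    by (simp add: sum_blocks_progression[symmetric] sum_distrib_left sum_subtractf)
qed

lemma inverse_nth_prime_le_beyond_count:
  assumes "count_terms_le nth_prime N \<le> k" "N > 0"
  shows "1 / real (nth_prime k) \<le> 1 / real N"
proof -
  have "N < nth_prime k"
    using assms(1) less_count_terms_le_iff[OF strict_mono_nth_prime, of k N] by simp
  then show ?thesis using assms(2) by (intro divide_left_mono) auto
qed

theorem prime_recip_sum_progression_asymp:
  fixes r s :: nat
  assumes r: "r \<ge> 1"
  defines "Q \<equiv> \<lambda>j. nth_prime (s + j * r)"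
  shows "\<exists>c E. \<forall>N \<ge> max 2 (Q 0).
           \<bar>(\<Sum>j<count_terms_le Q N. 1 / real (Q j)) - ln (ln (real N)) / real r - c\<bar> \<le> E / ln (real N)"
proof -
  define b where "b k = 1 / real (nth_prime k)" for k
  obtain D where D: "\<And>J. \<bar>(\<Sum>j<J. real r * b (s + j * r) - (\<Sum>t<r. b (s + j * r + t))) - D\<bar>
                         \<le> real r * b (s + J * r)"
    using decseq_block_sums_limit[OF decseq_inverse_nth_prime inverse_nth_prime_tendsto_zero]
    unfolding b_def by blast
  obtain B E where BE: "\<And>N. N \<ge> 2 \<Longrightarrow> \<bar>prime_recip_sum N - ln (ln (real N)) - B\<bar> \<le> E / ln (real N)"
    using prime_recip_sum_asymp by blast
  define c where "c = (B - (\<Sum>k<s. b k) + D) / real r"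
  have "real r * \<bar>(\<Sum>j<count_terms_le Q N. b (s + j * r)) - ln (ln (real N)) / real r - c\<bar>
          \<le> real r * ((E + 2 * real r) / real r / ln (real N))" if N: "N \<ge> max 2 (Q 0)" for N
  proof -
    define J where "J = count_terms_le Q N"
    define n where "n = count_terms_le nth_prime N"
    define X where "X = (\<Sum>k=n..<s + J * r. b k)"
    have "nth_prime s \<le> N" "N \<ge> 2" "ln (real N) > 0" using N by (auto simp: Q_def)
    note idx = count_terms_le_progression[OF strict_mono_nth_prime r this(1), folded Q_def J_def n_def]
    note b_small = inverse_nth_prime_le_beyond_count[of N, folded b_def n_def]
    have "X \<le> (\<Sum>k=n..<s + J * r. 1 / real N)" unfolding X_def using N by (intro sum_mono b_small) auto
    also have "\<dots> \<le> real r / real N"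
    proof -
      have "s + J * r < n + r" using idx by (cases J) auto
      then have "real (s + J * r - n) \<le> real r" by simp
      then show ?thesis using \<open>N \<ge> 2\<close> by (simp add: divide_right_mono)
    qed
    finally have X: "0 \<le> X" "X \<le> real r / real N" unfolding X_def b_def by (auto intro!: sum_nonneg)
    have "real r * b (s + J * r) \<le> real r / real N"
      using b_small[of "s + J * r"] idx N by (simp add: mult_left_mono divide_inverse)
    have eq: "real r * ((\<Sum>j<J. b (s + j * r)) - ln (ln (real N)) / real r - c)
        = (prime_recip_sum N - ln (ln (real N)) - B) + X
           + ((\<Sum>j<J. real r * b (s + j * r) - (\<Sum>t<r. b (s + j * r + t))) - D)"
    proof -
      have "s \<le> n" using idx by linarith
      have "real r * c = B - (\<Sum>k<s. b k) + D" "real r * (ln (ln (real N)) / real r) = ln (ln (real N))"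
        using r by (simp_all add: c_def)
      moreover have "prime_recip_sum N = (\<Sum>k<n. b k)"
        by (simp add: prime_recip_sum_eq_sum_nth_prime b_def n_def)
      ultimately show ?thesis
        using sum_progression_split[OF \<open>s \<le> n\<close> idx(3), of b] unfolding X_def right_diff_distrib
        by linarith
    qed
    have "real r * \<bar>(\<Sum>j<J. b (s + j * r)) - ln (ln (real N)) / real r - c\<bar>
        = \<bar>(prime_recip_sum N - ln (ln (real N)) - B) + X
           + ((\<Sum>j<J. real r * b (s + j * r) - (\<Sum>t<r. b (s + j * r + t))) - D)\<bar>"
      unfolding eq[symmetric] by (simp add: abs_mult)
    also have "\<dots> \<le> E / ln (real N) + real r / real N + real r / real N"
      using BE[OF \<open>N \<ge> 2\<close>] X D[of J] \<open>real r * b (s + J * r) \<le> real r / real N\<close>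
      unfolding abs_le_iff by (intro conjI; linarith)
    also have "\<dots> \<le> E / ln (real N) + real r / ln (real N) + real r / ln (real N)"
      using inverse_le_inverse_ln[of "real N"] \<open>N \<ge> 2\<close>
      by (intro add_mono order_refl) (simp_all add: divide_inverse mult_left_mono)
    also have "\<dots> = real r * ((E + 2 * real r) / real r / ln (real N))"
      using r \<open>ln (real N) > 0\<close> by (simp add: field_simps)
    finally show ?thesis unfolding J_def .
  qed
  then have "\<bar>(\<Sum>j<count_terms_le Q N. b (s + j * r)) - ln (ln (real N)) / real r - c\<bar>
      \<le> (E + 2 * real r) / real r / ln (real N)" if "N \<ge> max 2 (Q 0)" for N
    by (rule mult_left_le_imp_le) (use that r in auto)
  then show ?thesis unfolding b_def Q_def by blast
qed

section \<open>The logarithm of the product\<close>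

lemma sum_ln_one_minus_inverse_limit:
  fixes Q :: "nat \<Rightarrow> nat"
  assumes Q: "strict_mono Q" "Q 0 \<ge> 2"
  shows "\<exists>G. \<forall>J. \<bar>(\<Sum>j<J. ln (1 - 1 / real (Q j))) + (\<Sum>j<J. 1 / real (Q j)) + G\<bar>
               \<le> 2 / (real (Q J) - 1)"
proof -
  have Q2: "real (Q j) \<ge> 2" for j
    using Q(2) strict_mono_less_eq[OF Q(1), of 0 j] by simp
  define g where "g j = - ln (1 - 1 / real (Q j)) - 1 / real (Q j)" for j
  define h where "h j = 2 / (real (Q j) - 1)" for j
  have "\<bar>g j\<bar> \<le> h j - h (Suc j)" for j
  proof -
    have "0 \<le> 1 / real (Q j)" "1 / real (Q j) \<le> 1/2" using Q2[of j] by auto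
    note g_bounds = minus_ln_one_minus_bounds[OF this, folded g_def]
    have "Q j < Q (Suc j)" using strict_monoD[OF Q(1), of j "Suc j"] by simp
    then have "h (Suc j) \<le> 2 / real (Q j)"
      unfolding h_def using Q2[of j] by (intro divide_left_mono) auto
    moreover have "2 * (1 / real (Q j))^2 \<le> h j - 2 / real (Q j)"
      unfolding h_def using Q2[of j] by (intro two_over_square_le_telescoping) simp
    ultimately show ?thesis using g_bounds by simp
  qed
  moreover have "h \<longlonglongrightarrow> 0"
  proof -
    have "filterlim (\<lambda>j. real (Q j)) at_top sequentially"
      using filterlim_real_sequentially filterlim_subseq[OF Q(1)] by (rule filterlim_compose)
    moreover have "((\<lambda>x::real. 2 / (x - 1)) \<longlongrightarrow> 0) at_top" by real_asymp
    ultimately show ?thesis unfolding h_def using filterlim_compose by blast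
  qed
  ultimately obtain G where G: "\<forall>J\<ge>0. \<bar>(\<Sum>j=0..<J. g j) - G\<bar> \<le> h J"
    using partial_sums_limit_telescoping_bound[of 0 g h] by blast
  have "(\<Sum>j<J. ln (1 - 1 / real (Q j))) + (\<Sum>j<J. 1 / real (Q j)) = - (\<Sum>j<J. g j)" for J
    unfolding g_def by (simp add: sum_subtractf sum_negf)
  then have "\<bar>(\<Sum>j<J. ln (1 - 1 / real (Q j))) + (\<Sum>j<J. 1 / real (Q j)) + G\<bar> \<le> h J" for J
    using G by (simp add: atLeast0LessThan abs_minus_commute)
  then show ?thesis unfolding h_def by blast
qed

theorem sum_ln_one_minus_progression_asymp:
  fixes r s :: nat
  assumes r: "r \<ge> 1"
  defines "Q \<equiv> \<lambda>j. nth_prime (s + j * r)"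
  shows "\<exists>\<gamma> E. \<forall>N \<ge> max 2 (Q 0).
           \<bar>(\<Sum>j<count_terms_le Q N. ln (1 - 1 / real (Q j))) + ln (ln (real N)) / real r + \<gamma>\<bar>
             \<le> E / ln (real N)"
proof -
  obtain c E where cE: "\<And>N. N \<ge> max 2 (Q 0) \<Longrightarrow>
      \<bar>(\<Sum>j<count_terms_le Q N. 1 / real (Q j)) - ln (ln (real N)) / real r - c\<bar> \<le> E / ln (real N)"
    using prime_recip_sum_progression_asymp[OF r, of s] unfolding Q_def by blast
  have "strict_mono Q" unfolding Q_def by (rule strict_mono_progression[OF strict_mono_nth_prime r])
  moreover have "Q 0 \<ge> 2" unfolding Q_def using prime_ge_2_nat by simp
  ultimately obtain G where G: "\<And>J. \<bar>(\<Sum>j<J. ln (1 - 1 / real (Q j))) + (\<Sum>j<J. 1 / real (Q j)) + G\<bar>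
      \<le> 2 / (real (Q J) - 1)"
    using sum_ln_one_minus_inverse_limit by blast
  have "\<bar>(\<Sum>j<count_terms_le Q N. ln (1 - 1 / real (Q j))) + ln (ln (real N)) / real r + (c + G)\<bar>
          \<le> (E + 2) / ln (real N)" if N: "N \<ge> max 2 (Q 0)" for N
  proof -
    have "N < Q (count_terms_le Q N)"
      using less_count_terms_le_iff[OF \<open>strict_mono Q\<close>, of "count_terms_le Q N" N] by simp
    then have "2 / (real (Q (count_terms_le Q N)) - 1) \<le> 2 / real N"
      using N by (intro divide_left_mono) auto
    also have "\<dots> \<le> 2 / ln (real N)"
      using inverse_le_inverse_ln[of "real N"] N by (simp add: divide_inverse)
    finally have "\<bar>(\<Sum>j<count_terms_le Q N. ln (1 - 1 / real (Q j))) + ln (ln (real N)) / real r + (c + G)\<bar>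
        \<le> E / ln (real N) + 2 / ln (real N)"
      using cE[OF N] G[of "count_terms_le Q N"] unfolding abs_le_iff by (intro conjI; linarith)
    then show ?thesis by (simp add: add_divide_distrib)
  qed
  then show ?thesis by blast
qed

section \<open>From integer to real arguments\<close>

lemma le_nat_floor_iff:
  fixes x :: real
  assumes "x \<ge> 0"
  shows "real p \<le> x \<longleftrightarrow> p \<le> nat \<lfloor>x\<rfloor>"
  using assms le_nat_floor by (auto simp: le_nat_iff le_floor_iff)

lemma ln_ln_floor_bounds:
  fixes x :: real and N :: nat
  assumes N: "N \<ge> 2" and x: "real N \<le> x" "x < real N + 1"
  shows "0 \<le> ln (ln x) - ln (ln (real N))" "ln (ln x) - ln (ln (real N)) \<le> 2 / ln x"
    and "1 / ln (real N) \<le> 2 / ln x"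
proof -
  have "ln (real N) > 0" using N by simp
  have "ln (real N) \<le> ln x" using x N by (subst ln_le_cancel_iff) auto
  then have "ln x > 0" using \<open>ln (real N) > 0\<close> by linarith
  show "0 \<le> ln (ln x) - ln (ln (real N))" using \<open>ln (real N) > 0\<close> \<open>ln (real N) \<le> ln x\<close> by simp
  have "2 * real N \<le> real N * real N" using N by (intro mult_right_mono) auto
  then have "x \<le> real N * real N" using x N by linarith
  then have "ln x \<le> ln (real N * real N)" using x N by (subst ln_le_cancel_iff) auto
  then have "ln x \<le> 2 * ln (real N)" using N by (simp add: ln_mult)
  then show inv: "1 / ln (real N) \<le> 2 / ln x"
    using \<open>ln (real N) > 0\<close> \<open>ln x > 0\<close> by (simp add: field_simps)
  have "ln x - ln (real N) \<le> x / real N - 1"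
    using x N ln_le_minus_one[of "x / real N"] by (simp add: ln_div)
  also have "\<dots> \<le> 1" using x N by (simp add: field_simps)
  finally have "ln x - ln (real N) \<le> 1" .
  have "ln (ln x) - ln (ln (real N)) \<le> ln x / ln (real N) - 1"
    using \<open>ln (real N) > 0\<close> \<open>ln x > 0\<close> ln_le_minus_one[of "ln x / ln (real N)"] by (simp add: ln_div)
  also have "\<dots> = (ln x - ln (real N)) / ln (real N)" using \<open>ln (real N) > 0\<close> by (simp add: field_simps)
  also have "\<dots> \<le> 1 / ln (real N)"
    using \<open>ln x - ln (real N) \<le> 1\<close> \<open>ln (real N) > 0\<close> by (intro divide_right_mono) auto
  finally show "ln (ln x) - ln (ln (real N)) \<le> 2 / ln x" using inv by linarith
qed

lemma eventually_bound_at_floor: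
  fixes f :: "nat \<Rightarrow> real" and r :: nat
  assumes r: "r \<ge> 1" and bound: "\<And>N. N \<ge> N0 \<Longrightarrow> \<bar>f N + ln (ln (real N)) / real r + \<gamma>\<bar> \<le> E / ln (real N)"
  shows "eventually (\<lambda>x. \<bar>f (nat \<lfloor>x\<rfloor>) + ln (ln x) / real r + \<gamma>\<bar> \<le> (2 * \<bar>E\<bar> + 2) / ln x) at_top"
  using eventually_ge_at_top[of "real (max 2 N0)"]
proof eventually_elim
  case (elim x)
  define N where "N = nat \<lfloor>x\<rfloor>"
  have "N \<ge> max 2 N0" unfolding N_def using elim by (rule le_nat_floor)
  then have "N \<ge> 2" "N \<ge> N0" by auto
  have "real N \<le> x" "x < real N + 1" unfolding N_def using elim by linarith+
  note close = ln_ln_floor_bounds[OF \<open>N \<ge> 2\<close> this]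
  have "E / ln (real N) \<le> \<bar>E\<bar> * (1 / ln (real N))"
    using \<open>N \<ge> 2\<close> by (simp add: divide_inverse mult_right_mono)
  also have "\<dots> \<le> \<bar>E\<bar> * (2 / ln x)" using close(3) by (intro mult_left_mono) auto
  finally have "E / ln (real N) \<le> \<bar>E\<bar> * (2 / ln x)" .
  moreover have "0 \<le> (ln (ln x) - ln (ln (real N))) / real r" using close(1) by simp
  moreover have "(ln (ln x) - ln (ln (real N))) / real r \<le> 2 / ln x"
    using close(1,2) r divide_left_mono[of 1 "real r" "ln (ln x) - ln (ln (real N))"] by simp
  moreover have "ln (ln x) / real r = ln (ln (real N)) / real r + (ln (ln x) - ln (ln (real N))) / real r"
    by (simp add: diff_divide_distrib)
  ultimately have "\<bar>f N + ln (ln x) / real r + \<gamma>\<bar> \<le> \<bar>E\<bar> * (2 / ln x) + 2 / ln x"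
    using bound[OF \<open>N \<ge> N0\<close>] unfolding abs_le_iff by (intro conjI; linarith)
  then show ?case unfolding N_def by (simp add: add_divide_distrib mult.commute)
qed

lemma arith_list_eq_range:
  assumes "1 \<le> r0"
  shows "arith_list r r0 = range (\<lambda>j. nth_prime (r0 - 1 + j * r))"
proof -
  have "r0 + j * r - 1 = r0 - 1 + j * r" for j using assms by simp
  then show ?thesis unfolding arith_list_def by auto
qed

theorem sum_ln_arith_list_asymp:
  fixes r r0 :: nat
  assumes "1 \<le> r" "1 \<le> r0"
  shows "\<exists>\<gamma> K. eventually (\<lambda>x. \<bar>(\<Sum>p\<in>{p\<in>arith_list r r0. real p \<le> x}. ln (1 - 1 / real p))
                              + ln (ln x) / real r + \<gamma>\<bar> \<le> K / ln x) at_top"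
proof -
  define Q where "Q = (\<lambda>j. nth_prime (r0 - 1 + j * r))"
  obtain \<gamma> E where "\<And>N. N \<ge> max 2 (Q 0) \<Longrightarrow>
      \<bar>(\<Sum>j<count_terms_le Q N. ln (1 - 1 / real (Q j))) + ln (ln (real N)) / real r + \<gamma>\<bar> \<le> E / ln (real N)"
    using sum_ln_one_minus_progression_asymp[OF assms(1), of "r0 - 1"] unfolding Q_def by blast
  from eventually_bound_at_floor[OF assms(1) this]
  have ev: "eventually (\<lambda>x. \<bar>(\<Sum>j<count_terms_le Q (nat \<lfloor>x\<rfloor>). ln (1 - 1 / real (Q j)))
      + ln (ln x) / real r + \<gamma>\<bar> \<le> (2 * \<bar>E\<bar> + 2) / ln x) at_top" .
  have eq: "(\<Sum>p\<in>{p\<in>arith_list r r0. real p \<le> x}. ln (1 - 1 / real p))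
      = (\<Sum>j<count_terms_le Q (nat \<lfloor>x\<rfloor>). ln (1 - 1 / real (Q j)))" if "x \<ge> 0" for x :: real
  proof -
    have "{p\<in>arith_list r r0. real p \<le> x} = {p\<in>range Q. p \<le> nat \<lfloor>x\<rfloor>}"
      using arith_list_eq_range[OF assms(2)] le_nat_floor_iff[OF that] unfolding Q_def by auto
    then show ?thesis
      using sum_terms_le_strict_mono[OF strict_mono_progression[OF strict_mono_nth_prime assms(1)]]
      unfolding Q_def by simp
  qed
  have "eventually (\<lambda>x. \<bar>(\<Sum>p\<in>{p\<in>arith_list r r0. real p \<le> x}. ln (1 - 1 / real p))
      + ln (ln x) / real r + \<gamma>\<bar> \<le> (2 * \<bar>E\<bar> + 2) / ln x) at_top"
    using ev eventually_ge_at_top[of "0::real"] by eventually_elim (simp add: eq)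
  then show ?thesis by blast
qed

section \<open>Exponentiating\<close>

lemma abs_exp_minus_one_le:
  fixes u :: real
  assumes "\<bar>u\<bar> \<le> 1"
  shows "\<bar>exp u - 1\<bar> \<le> 3 * \<bar>u\<bar>"
proof -
  have "1 - exp u \<le> \<bar>u\<bar>" using exp_ge_add_one_self[of u] by linarith
  moreover have "exp u - 1 \<le> exp u * \<bar>u\<bar>"
    using mult_left_mono[of "1 - exp (- u)" "\<bar>u\<bar>" "exp u"] exp_ge_add_one_self[of "- u"]
    by (simp add: algebra_simps exp_minus_inverse)
  moreover have "exp u \<le> 3" using assms exp_le order_trans[of "exp u" "exp 1" 3] by simp
  ultimately show ?thesis using mult_right_mono[of "exp u" 3 "\<bar>u\<bar>"] by linarith
qed

lemma exp_perturbation_bigo: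
  fixes F a :: "real \<Rightarrow> real"
  assumes "eventually (\<lambda>x. \<bar>F x\<bar> \<le> K / ln x) at_top"
  shows "(\<lambda>x. a x * exp (F x) - a x) \<in> O(\<lambda>x. a x / ln x)"
proof
  have "((\<lambda>x::real. \<bar>K\<bar> / ln x) \<longlongrightarrow> 0) at_top" by real_asymp
  then have "eventually (\<lambda>x. \<bar>K\<bar> / ln x < 1) at_top" by (rule order_tendstoD) simp
  moreover have "eventually (\<lambda>x::real. ln x > 0) at_top" by real_asymp
  ultimately show "eventually (\<lambda>x. norm (a x * exp (F x) - a x) \<le> 3 * \<bar>K\<bar> * norm (a x / ln x)) at_top"
    using assms
  proof eventually_elim
    case (elim x)
    then have "\<bar>F x\<bar> \<le> \<bar>K\<bar> / ln x" by (smt (verit) divide_right_mono)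
    then have "\<bar>exp (F x) - 1\<bar> \<le> 3 * (\<bar>K\<bar> / ln x)"
      using abs_exp_minus_one_le[of "F x"] elim(1) by linarith
    have "norm (a x * exp (F x) - a x) = \<bar>a x\<bar> * \<bar>exp (F x) - 1\<bar>"
      by (simp add: abs_mult[symmetric] right_diff_distrib)
    also have "\<dots> \<le> \<bar>a x\<bar> * (3 * (\<bar>K\<bar> / ln x))"
      using \<open>\<bar>exp (F x) - 1\<bar> \<le> _\<close> by (rule mult_left_mono) simp
    also have "\<dots> = 3 * \<bar>K\<bar> * norm (a x / ln x)" using elim(2) by (simp add: abs_div)
    finally show ?case .
  qed
qed

lemma bigo_eventually_eq_cmult:
  fixes f f' g g' :: "real \<Rightarrow> real"
  assumes "f \<in> O(g)" "eventually (\<lambda>x. f x = f' x) at_top"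
    and "eventually (\<lambda>x. g x = c * g' x) at_top" "c \<noteq> 0"
  shows "f' \<in> O(g')"
  using assms(1) landau_o.big.cong_ex[OF assms(2,3)] assms(4) by simp

lemma exp_asymp_of_ln_asymp:
  fixes L :: "real \<Rightarrow> real" and r :: nat and \<gamma> K :: real
  assumes "eventually (\<lambda>x. \<bar>L x + ln (ln x) / real r + \<gamma>\<bar> \<le> K / ln x) at_top"
  shows "(\<lambda>x. exp (L x) - exp (- \<gamma>) / ln x powr (1 / real r)) \<in> O(\<lambda>x. 1 / ln x powr (1 + 1 / real r))"
    and "(\<lambda>x. exp (- L x) - exp \<gamma> * ln x powr (1 / real r)) \<in> O(\<lambda>x. ln x powr (1 / real r - 1))"
proof -
  define F where "F x = L x + ln (ln x) / real r + \<gamma>" for x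
  define a where "a x = exp (- \<gamma>) / ln x powr (1 / real r)" for x
  define b where "b x = exp \<gamma> * ln x powr (1 / real r)" for x
  have F_small: "eventually (\<lambda>x. \<bar>F x\<bar> \<le> K / ln x) at_top"
    using assms unfolding F_def .
  have "eventually (\<lambda>x::real. ln x > 0) at_top" by real_asymp
  then have ev: "eventually (\<lambda>x. exp (L x) = a x * exp (F x) \<and> exp (- L x) = b x * exp (- F x)
      \<and> a x / ln x = exp (- \<gamma>) * (1 / ln x powr (1 + 1 / real r))
      \<and> b x / ln x = exp \<gamma> * ln x powr (1 / real r - 1)) at_top"
  proof eventually_elim
    case (elim x)
    then have "ln x powr (1 / real r) = exp (ln (ln x) / real r)" by (simp add: powr_def)
    with elim show ?case
      by (simp add: a_def b_def F_def exp_add exp_diff exp_minus powr_add powr_diff field_simps)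
  qed
  have "(\<lambda>x. a x * exp (F x) - a x) \<in> O(\<lambda>x. a x / ln x)"
    using F_small by (rule exp_perturbation_bigo)
  then show "(\<lambda>x. exp (L x) - exp (- \<gamma>) / ln x powr (1 / real r)) \<in> O(\<lambda>x. 1 / ln x powr (1 + 1 / real r))"
    by (rule bigo_eventually_eq_cmult) (use ev in \<open>auto simp: a_def elim: eventually_mono\<close>)
  have "(\<lambda>x. b x * exp (- F x) - b x) \<in> O(\<lambda>x. b x / ln x)"
    using F_small by (intro exp_perturbation_bigo[of _ K]) simp
  then show "(\<lambda>x. exp (- L x) - exp \<gamma> * ln x powr (1 / real r)) \<in> O(\<lambda>x. ln x powr (1 / real r - 1))"
    by (rule bigo_eventually_eq_cmult) (use ev in \<open>auto simp: b_def elim: eventually_mono\<close>)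
qed

lemma prod_one_minus_inverse_eq_exp:
  fixes A :: "nat set"
  assumes "\<And>p. p \<in> A \<Longrightarrow> p \<ge> 2"
  shows "(\<Prod>p\<in>A. 1 - 1 / real p) = exp (\<Sum>p\<in>A. ln (1 - 1 / real p))"
    and "(\<Prod>p\<in>A. inverse (1 - 1 / real p)) = exp (- (\<Sum>p\<in>A. ln (1 - 1 / real p)))"
proof -
  have exp_ln: "exp (ln (1 - 1 / real p)) = 1 - 1 / real p" if "p \<in> A" for p
    using assms[OF that] by (intro exp_ln) (simp add: field_simps)
  show "(\<Prod>p\<in>A. 1 - 1 / real p) = exp (\<Sum>p\<in>A. ln (1 - 1 / real p))"
    by (cases "finite A") (simp_all add: exp_sum exp_ln cong: prod.cong)
  show "(\<Prod>p\<in>A. inverse (1 - 1 / real p)) = exp (- (\<Sum>p\<in>A. ln (1 - 1 / real p)))"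
    by (cases "finite A") (simp_all add: exp_sum exp_ln exp_minus cong: prod.cong flip: sum_negf)
qed

theorem mainTheorem16:
  fixes r r0 :: nat
  assumes "1 \<le> r" and "1 \<le> r0" and "r0 \<le> r"
  defines "M \<equiv> arith_list r r0"
  shows "\<exists>\<gamma>::real.
    (\<lambda>x::real. (\<Prod>p\<in>{p\<in>M. real p \<le> x}. 1 - 1 / real p)
        - exp (- \<gamma>) / ln x powr (1 / real r))
      \<in> O[at_top](\<lambda>x. 1 / ln x powr (1 + 1 / real r)) \<and>
    (\<lambda>x::real. (\<Prod>p\<in>{p\<in>M. real p \<le> x}. inverse (1 - 1 / real p))
        - exp \<gamma> * ln x powr (1 / real r))
      \<in> O[at_top](\<lambda>x. ln x powr (1 / real r - 1))"
proof -
  obtain \<gamma> K where "eventually (\<lambda>x. \<bar>(\<Sum>p\<in>{p\<in>M. real p \<le> x}. ln (1 - 1 / real p))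
      + ln (ln x) / real r + \<gamma>\<bar> \<le> K / ln x) at_top"
    using sum_ln_arith_list_asymp[OF assms(1,2)] unfolding M_def by blast
  note asymp = exp_asymp_of_ln_asymp[OF this]
  have "p \<ge> 2" if "p \<in> M" for p
    using that prime_ge_2_nat[OF prime_nth_prime] unfolding M_def arith_list_def by auto
  then have prod_eq:
      "(\<Prod>p\<in>{p\<in>M. real p \<le> x}. 1 - 1 / real p) = exp (\<Sum>p\<in>{p\<in>M. real p \<le> x}. ln (1 - 1 / real p))"
      "(\<Prod>p\<in>{p\<in>M. real p \<le> x}. inverse (1 - 1 / real p))
         = exp (- (\<Sum>p\<in>{p\<in>M. real p \<le> x}. ln (1 - 1 / real p)))" for x
    using prod_one_minus_inverse_eq_exp[of "{p\<in>M. real p \<le> x}"] by auto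
  show ?thesis unfolding prod_eq using asymp by blast
qed

end
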